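(* Let $G=K(n_1,\dots,n_s)$ be a complete $s$-partite graph ($s\ge 2$) with parts $V_1,\dots,V_s$, $|V_j|=n_j$, $n_1\ge n_2\ge\cdots\ge n_s$, such that $3\le n_1\le 5$ and $n_2=1$. If $n_1\ge 4$, then there is an optimal $3$-relaxed coloring $f$ of $G$ with $|f(V_1)|=1$. If $n_1=3$, then there is an optimal $3$-relaxed coloring of $G$ which assigns the same color to the three vertices of $V_1$ and the unique vertex of $V_2$.
   Context: A map $f$ from $V(G)$ to a finite set of colors is a $3$-relaxed coloring if every vertex $u$ has at most $3$ neighbors $v$ with $f(v)=f(u)$; it is optimal if it uses the minimum possible number $\chi_3(G)$ of colors. $f(S)$ denotes the set of colors used on $S$. *)

theory Defs
  imports Main
begin

text \<open>A (finite simple) graph is given by a vertex set V and a symmetric irreflexive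
adjacency relation E.\<close>

definition relaxed_coloring :: "nat \<Rightarrow> 'a set \<Rightarrow> ('a \<Rightarrow> 'a \<Rightarrow> bool) \<Rightarrow> ('a \<Rightarrow> nat) \<Rightarrow> bool" where
  "relaxed_coloring k V E f \<longleftrightarrow> (\<forall>u\<in>V. card {v\<in>V. E u v \<and> f v = f u} \<le> k)"

definition relaxed_chromatic :: "nat \<Rightarrow> 'a set \<Rightarrow> ('a \<Rightarrow> 'a \<Rightarrow> bool) \<Rightarrow> nat" where
  "relaxed_chromatic k V E = (LEAST m. \<exists>f. relaxed_coloring k V E f \<and> card (f ` V) = m)"

definition optimal_relaxed_coloring :: "nat \<Rightarrow> 'a set \<Rightarrow> ('a \<Rightarrow> 'a \<Rightarrow> bool) \<Rightarrow> ('a \<Rightarrow> nat) \<Rightarrow> bool" where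
  "optimal_relaxed_coloring k V E f \<longleftrightarrow>
     relaxed_coloring k V E f \<and> card (f ` V) = relaxed_chromatic k V E"

text \<open>Complete s-partite graph K(n_1,...,n_s): vertices (j,i) with 1 \<le> j \<le> s, i < n j;
part V_j = {(j,i). i < n j}; two vertices are adjacent iff they lie in different parts.\<close>

definition cmp_part :: "(nat \<Rightarrow> nat) \<Rightarrow> nat \<Rightarrow> (nat \<times> nat) set" where
  "cmp_part n j = {(j, i) | i. i < n j}"

definition cmp_vertices :: "nat \<Rightarrow> (nat \<Rightarrow> nat) \<Rightarrow> (nat \<times> nat) set" where
  "cmp_vertices s n = (\<Union>j\<in>{1..s}. cmp_part n j)"

definition cmp_adj :: "nat \<times> nat \<Rightarrow> nat \<times> nat \<Rightarrow> bool" where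
  "cmp_adj u v \<longleftrightarrow> fst u \<noteq> fst v"

end

theory Submission
  imports Defs
begin

text \<open>In \<open>K(n\<^sub>1, 1, \<dots>, 1)\<close> a vertex of a singleton part is adjacent to every other vertex of
its colour class, so such a class has at most 4 vertices. Weighting a class by its number of
singleton-part vertices plus \<open>min (its V\<^sub>1-vertices) 4\<close> therefore gives weight at most 4, while the
weights sum to at least \<open>(s - 1) + min n\<^sub>1 4\<close>. Conversely, give \<open>V\<^sub>1\<close> one colour and the singleton
parts colours in consecutive blocks of four; when \<open>n\<^sub>1 = 3\<close> the vertex of \<open>V\<^sub>2\<close> joins the colour of
\<open>V\<^sub>1\<close>. This meets the counting bound.\<close>

lemma mem_cmp_part: "v \<in> cmp_part n j \<longleftrightarrow> fst v = j \<and> snd v < n j"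
  unfolding cmp_part_def by (cases v) auto

lemma mem_cmp_vertices: "v \<in> cmp_vertices s n \<longleftrightarrow> fst v \<in> {1..s} \<and> snd v < n (fst v)"
  unfolding cmp_vertices_def by (auto simp: mem_cmp_part)

lemma cmp_part_eq_image: "cmp_part n j = (\<lambda>i. (j, i)) ` {..<n j}"
  unfolding cmp_part_def by auto

lemma card_cmp_part: "card (cmp_part n j) = n j"
  by (simp add: cmp_part_eq_image card_image inj_on_def)

lemma finite_cmp_vertices: "finite (cmp_vertices s n)"
  unfolding cmp_vertices_def by (simp add: cmp_part_eq_image)

lemma card_eq_sum_card_fibres:
  assumes "finite A" "finite K" "f ` A \<subseteq> K"
  shows "card A = (\<Sum>c\<in>K. card {a\<in>A. f a = c})"
proof -
  have "\<forall>a\<in>A. {c\<in>K. f a = c} = {f a}"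
    using assms(3) by auto
  then show ?thesis
    using sum_multicount[OF assms(2,1), of "\<lambda>c a. f a = c" 1] by simp
qed

lemma min_sum_le_sum_min:
  fixes g :: "'a \<Rightarrow> nat"
  assumes "finite A"
  shows "min (\<Sum>x\<in>A. g x) m \<le> (\<Sum>x\<in>A. min (g x) m)"
  using assms by (induction A rule: finite_induct) auto

lemma optimal_relaxed_coloringI:
  assumes "relaxed_coloring k V E f"
    and "\<And>g. relaxed_coloring k V E g \<Longrightarrow> card (f ` V) \<le> card (g ` V)"
  shows "optimal_relaxed_coloring k V E f"
  unfolding optimal_relaxed_coloring_def relaxed_chromatic_def
  by (rule conjI[OF assms(1)], rule Least_equality[symmetric]) (use assms in auto)

lemma card_same_color_le_if_singleton_part:
  assumes "relaxed_coloring k (cmp_vertices s n) cmp_adj f"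
    and "u \<in> cmp_vertices s n" and "n (fst u) = 1"
  shows "card {v \<in> cmp_vertices s n. f v = f u} \<le> k + 1"
proof -
  let ?V = "cmp_vertices s n"
  have sub: "{v \<in> ?V. f v = f u} \<subseteq> insert u {v \<in> ?V. cmp_adj u v \<and> f v = f u}"
    using assms(2,3) by (auto simp: cmp_adj_def mem_cmp_vertices prod_eq_iff)
  then have "card {v \<in> ?V. f v = f u} \<le> card {v \<in> ?V. cmp_adj u v \<and> f v = f u} + 1"
    using card_mono[OF _ sub] card_insert_if[of "{v \<in> ?V. cmp_adj u v \<and> f v = f u}" u]
    by (simp add: finite_cmp_vertices split: if_splits)
  moreover have "card {v \<in> ?V. cmp_adj u v \<and> f v = f u} \<le> k"
    using assms(1,2) unfolding relaxed_coloring_def by blast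
  ultimately show ?thesis by linarith
qed

lemma cmp_vertices_minus_first_part:
  assumes "\<forall>j\<in>{2..s}. n j = 1"
  shows "cmp_vertices s n - cmp_part n 1 = (\<lambda>j. (j, 0)) ` {2..s}"
proof (intro equalityI subsetI)
  fix v assume "v \<in> cmp_vertices s n - cmp_part n 1"
  then have "fst v \<in> {1..s}" "snd v < n (fst v)" "fst v \<noteq> 1"
    by (auto simp: mem_cmp_vertices mem_cmp_part)
  then have "fst v \<in> {2..s}" "snd v = 0"
    using assms by auto
  then show "v \<in> (\<lambda>j. (j, 0)) ` {2..s}"
    by (metis image_eqI prod.collapse)
qed (use assms in \<open>auto simp: mem_cmp_vertices mem_cmp_part\<close>)

lemma card_color_class_weight_le:
  assumes ones: "\<forall>j\<in>{2..s}. n j = 1"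
    and f: "relaxed_coloring 3 (cmp_vertices s n) cmp_adj f"
  shows "card {v \<in> cmp_vertices s n - cmp_part n 1. f v = c}
    + min (card {v \<in> cmp_part n 1. f v = c}) 4 \<le> 4"
proof (cases "\<exists>u \<in> cmp_vertices s n - cmp_part n 1. f u = c")
  case True
  define V where "V = cmp_vertices s n"
  define P where "P = cmp_part n 1"
  obtain u where u: "u \<in> V - P" "f u = c"
    using True by (auto simp: V_def P_def)
  then have "n (fst u) = 1"
    using ones unfolding V_def P_def cmp_vertices_minus_first_part[OF ones] by auto
  then have "card {v \<in> V. f v = c} \<le> 4"
    using card_same_color_le_if_singleton_part[OF f] u by (fastforce simp: V_def)
  moreover have "P \<subseteq> V"
    using u by (auto simp: V_def P_def mem_cmp_vertices mem_cmp_part)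
  then have "{v \<in> V. f v = c} = {v \<in> V - P. f v = c} \<union> {v \<in> P. f v = c}"
    by blast
  moreover have "card ({v \<in> V - P. f v = c} \<union> {v \<in> P. f v = c})
      = card {v \<in> V - P. f v = c} + card {v \<in> P. f v = c}"
    using finite_cmp_vertices by (intro card_Un_disjoint) (auto simp: V_def P_def cmp_part_eq_image)
  ultimately have "card {v \<in> V - P. f v = c} + card {v \<in> P. f v = c} \<le> 4"
    by simp
  then show ?thesis
    by (simp add: V_def P_def min_def)
next
  case False
  then have "{v \<in> cmp_vertices s n - cmp_part n 1. f v = c} = {}"
    by blast
  then show ?thesis
    by (simp only: card.empty)
qed

lemma card_relaxed_coloring_image_lower_bound:
  assumes "1 \<le> s" and ones: "\<forall>j\<in>{2..s}. n j = 1"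
    and f: "relaxed_coloring 3 (cmp_vertices s n) cmp_adj f"
  shows "s - 1 + min (n 1) 4 \<le> 4 * card (f ` cmp_vertices s n)"
proof -
  define V where "V = cmp_vertices s n"
  define P where "P = cmp_part n 1"
  define S where "S = V - P"
  define K where "K = f ` V"
  have fin: "finite V" "finite K" "finite P" "finite S"
    using finite_cmp_vertices by (auto simp: V_def K_def P_def S_def cmp_part_eq_image)
  have "P \<subseteq> V"
    using assms(1) by (auto simp: V_def P_def mem_cmp_vertices mem_cmp_part)
  have card_S: "card S = s - 1"
    unfolding S_def V_def P_def cmp_vertices_minus_first_part[OF ones]
    by (simp add: card_image inj_on_def)
  have "card S = (\<Sum>c\<in>K. card {v\<in>S. f v = c})"
    by (rule card_eq_sum_card_fibres) (use fin in \<open>auto simp: K_def S_def\<close>)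
  moreover have "card P = (\<Sum>c\<in>K. card {v\<in>P. f v = c})"
    by (rule card_eq_sum_card_fibres) (use fin \<open>P \<subseteq> V\<close> in \<open>auto simp: K_def\<close>)
  ultimately have "s - 1 + min (n 1) 4
      = (\<Sum>c\<in>K. card {v\<in>S. f v = c}) + min (\<Sum>c\<in>K. card {v\<in>P. f v = c}) 4"
    using card_S card_cmp_part[of n 1] by (simp add: P_def)
  also have "\<dots> \<le> (\<Sum>c\<in>K. card {v\<in>S. f v = c} + min (card {v\<in>P. f v = c}) 4)"
    using min_sum_le_sum_min[OF fin(2)] by (simp add: sum.distrib)
  also have "\<dots> \<le> (\<Sum>c\<in>K. 4)"
    using card_color_class_weight_le[OF ones f] by (intro sum_mono) (simp add: S_def V_def P_def)
  finally show ?thesis by (simp add: K_def V_def mult.commute)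
qed

text \<open>Colour 0 on \<open>V\<^sub>1\<close>, colour \<open>(j + d) div 4\<close> on the singleton part \<open>j \<ge> 2\<close>: the \<open>2 - d\<close> parts
\<open>j < 4 - d\<close> share colour 0 with \<open>V\<^sub>1\<close>, the others are grouped in blocks of four.\<close>

definition block_coloring :: "nat \<Rightarrow> nat \<times> nat \<Rightarrow> nat" where
  "block_coloring d v = (if fst v = 1 then 0 else (fst v + d) div 4)"

lemma card_div_4_fibre_le:
  "card {i::nat. 2 \<le> i \<and> (i + d) div 4 = q} \<le> (if q = 0 then 2 - d else 4)"
proof -
  have "{i. 2 \<le> i \<and> (i + d) div 4 = q} \<subseteq> {max 2 (4 * q - d)..<4 * q + 4 - d}"
    by auto
  from card_mono[OF _ this] show ?thesis
    by auto
qed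

lemma block_coloring_class_subset:
  assumes "\<forall>j\<in>{2..s}. n j = 1"
  shows "{v \<in> cmp_vertices s n. block_coloring d v = q}
    \<subseteq> (if q = 0 then cmp_part n 1 else {}) \<union> (\<lambda>i. (i, 0)) ` {i. 2 \<le> i \<and> (i + d) div 4 = q}"
proof
  fix v assume v: "v \<in> {v \<in> cmp_vertices s n. block_coloring d v = q}"
  show "v \<in> (if q = 0 then cmp_part n 1 else {}) \<union> (\<lambda>i. (i, 0)) ` {i. 2 \<le> i \<and> (i + d) div 4 = q}"
  proof (cases "fst v = 1")
    case True
    then show ?thesis
      using v by (auto simp: mem_cmp_vertices mem_cmp_part block_coloring_def)
  next
    case False
    then have "fst v \<in> {2..s}" "snd v = 0" "(fst v + d) div 4 = q"
      using v assms by (auto simp: mem_cmp_vertices block_coloring_def)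
    then show ?thesis
      by (auto simp: prod_eq_iff intro!: image_eqI[of v _ "fst v"])
  qed
qed

lemma relaxed_coloring_block_coloring:
  assumes ones: "\<forall>j\<in>{2..s}. n j = 1" and small: "d < 2 \<Longrightarrow> n 1 \<le> d + 2"
  shows "relaxed_coloring 3 (cmp_vertices s n) cmp_adj (block_coloring d)"
  unfolding relaxed_coloring_def
proof
  let ?V = "cmp_vertices s n" and ?g = "block_coloring d"
  fix u assume u: "u \<in> ?V"
  define q where "q = ?g u"
  define B where "B = (\<lambda>i. (i, 0::nat)) ` {i. 2 \<le> i \<and> (i + d) div 4 = q}"
  define C where "C = (if q = 0 then cmp_part n 1 else {}) \<union> B"
  have card_B: "card B \<le> (if q = 0 then 2 - d else 4)"
    unfolding B_def using card_div_4_fibre_le by (simp add: card_image inj_on_def)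
  have "finite {i::nat. 2 \<le> i \<and> (i + d) div 4 = q}"
    by (rule finite_subset[of _ "{..<4 * q + 4}"]) auto
  then have fin_C: "finite C"
    by (simp add: C_def B_def cmp_part_eq_image)
  have class_sub: "{v \<in> ?V. ?g v = q} \<subseteq> C"
    unfolding C_def B_def by (rule block_coloring_class_subset[OF ones])
  then have N_sub: "{v \<in> ?V. cmp_adj u v \<and> ?g v = ?g u} \<subseteq> C - cmp_part n (fst u)"
    by (auto simp: q_def cmp_adj_def mem_cmp_part)
  show "card {v \<in> ?V. cmp_adj u v \<and> ?g v = ?g u} \<le> 3"
  proof (cases "fst u = 1")
    case True
    then have "C - cmp_part n (fst u) \<subseteq> B"
      by (auto simp: C_def)
    with N_sub have "card {v \<in> ?V. cmp_adj u v \<and> ?g v = ?g u} \<le> card B"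
      using fin_C by (intro card_mono) (auto simp: C_def)
    moreover have "q = 0"
      using True by (simp add: q_def block_coloring_def)
    ultimately show ?thesis
      using card_B by simp
  next
    case False
    have "u \<in> C" "u \<in> cmp_part n (fst u)"
      using class_sub u by (auto simp: q_def mem_cmp_part mem_cmp_vertices)
    then have "{v \<in> ?V. cmp_adj u v \<and> ?g v = ?g u} \<subseteq> C - {u}"
      using N_sub by blast
    then have "card {v \<in> ?V. cmp_adj u v \<and> ?g v = ?g u} \<le> card (C - {u})"
      using fin_C by (intro card_mono) simp_all
    also have "\<dots> = card C - 1"
      using fin_C \<open>u \<in> C\<close> by simp
    finally have "card {v \<in> ?V. cmp_adj u v \<and> ?g v = ?g u} \<le> card C - 1" .
    moreover have "card C \<le> (if q = 0 then n 1 else 0) + card B"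
      using card_Un_le[of "if q = 0 then cmp_part n 1 else {}" B]
      by (simp add: C_def card_cmp_part split: if_splits)
    moreover have "q = 0 \<Longrightarrow> d < 2"
      using False u by (auto simp: q_def block_coloring_def mem_cmp_vertices)
    ultimately show ?thesis
      using card_B small by (simp split: if_splits)
  qed
qed

lemma card_block_coloring_image_le:
  "card (block_coloring d ` cmp_vertices s n) \<le> (s + d) div 4 + 1"
proof -
  have "block_coloring d ` cmp_vertices s n \<subseteq> {0..(s + d) div 4}"
    by (auto simp: block_coloring_def mem_cmp_vertices div_le_mono)
  from card_mono[OF _ this] show ?thesis
    by simp
qed

lemma optimal_relaxed_coloring_block_coloring:
  assumes "1 \<le> s" and ones: "\<forall>j\<in>{2..s}. n j = 1" and "2 \<le> n 1"
  shows "optimal_relaxed_coloring 3 (cmp_vertices s n) cmp_adj (block_coloring (min (n 1) 4 - 2))"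
proof (rule optimal_relaxed_coloringI)
  let ?d = "min (n 1) 4 - 2"
  show "relaxed_coloring 3 (cmp_vertices s n) cmp_adj (block_coloring ?d)"
    by (rule relaxed_coloring_block_coloring[OF ones]) auto
  fix g assume "relaxed_coloring 3 (cmp_vertices s n) cmp_adj g"
  then have "s + ?d < 4 * card (g ` cmp_vertices s n)"
    using card_relaxed_coloring_image_lower_bound[OF \<open>1 \<le> s\<close> ones] assms(3) by fastforce
  then have "(s + ?d) div 4 < card (g ` cmp_vertices s n)"
    by (simp add: less_mult_imp_div_less mult.commute)
  then show "card (block_coloring ?d ` cmp_vertices s n) \<le> card (g ` cmp_vertices s n)"
    using card_block_coloring_image_le[of ?d s n] by linarith
qed

theorem lemma5p5:
  fixes s :: nat and n :: "nat \<Rightarrow> nat"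
  assumes "s \<ge> 2"
    and "\<forall>j\<in>{1..s}. n j \<ge> 1"
    and "\<forall>j\<in>{1..s}. \<forall>j'\<in>{1..s}. j \<le> j' \<longrightarrow> n j' \<le> n j"
    and "3 \<le> n 1" and "n 1 \<le> 5" and "n 2 = 1"
  shows "(n 1 \<ge> 4 \<longrightarrow>
            (\<exists>f. optimal_relaxed_coloring 3 (cmp_vertices s n) cmp_adj f
                 \<and> card (f ` cmp_part n 1) = 1))
       \<and> (n 1 = 3 \<longrightarrow>
            (\<exists>f. optimal_relaxed_coloring 3 (cmp_vertices s n) cmp_adj f
                 \<and> (\<exists>c. \<forall>v \<in> cmp_part n 1 \<union> cmp_part n 2. f v = c)))"
proof -
  have ones: "\<forall>j\<in>{2..s}. n j = 1"
    using assms(1-3,6) by (metis atLeastAtMost_iff le_antisym one_le_numeral order_trans)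
  define f where "f = block_coloring (min (n 1) 4 - 2)"
  have opt: "optimal_relaxed_coloring 3 (cmp_vertices s n) cmp_adj f"
    unfolding f_def using assms(1,4) ones by (intro optimal_relaxed_coloring_block_coloring) auto
  have "f ` cmp_part n 1 = {0}"
    using assms(4) by (auto simp: f_def block_coloring_def cmp_part_eq_image image_iff intro!: exI[of _ 0])
  moreover have "n 1 = 3 \<Longrightarrow> \<forall>v \<in> cmp_part n 1 \<union> cmp_part n 2. f v = 0"
    by (auto simp: f_def block_coloring_def mem_cmp_part)
  ultimately show ?thesis
    using opt by auto
qed

end
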